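(* Let $\mathcal A$ be an ordered normed algebra with unit $e$ whose algebra cone $\mathcal A^+$ is normal. Then there do not exist $a,b\in\mathcal A$, with at least one of $a,b$ positive, such that $ab-ba\geq e$.
   Context: A normed algebra $\mathcal A$ (real or complex, with submultiplicative norm) with unit $e$. A cone is a nonempty subset $\mathcal A^+\subseteq\mathcal A$ with $\mathcal A^++\mathcal A^+\subseteq\mathcal A^+$, $\lambda\mathcal A^+\subseteq\mathcal A^+$ for all $\lambda\geq 0$, and $\mathcal A^+\cap(-\mathcal A^+)=\{0\}$; it induces the partial order $a\leq b \iff b-a\in\mathcal A^+$. Elements of $\mathcal A^+$ are called positive. The cone is an algebra cone if $\mathcal A^+\cdot\mathcal A^+\subseteq\mathcal A^+$ and $e\in\mathcal A^+$; then $\mathcal A$ is called an ordered normed algebra. The cone is normal if there is a constant $\alpha>0$ such that $0\leq x\leq y$ implies $\|x\|\leq\alpha\|y\|$. *)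

theory Defs
  imports Main "HOL.Real_Vector_Spaces"
begin

text \<open>A cone in a (real or complex) normed algebra, viewed as a real vector space
  (complex algebras are in particular real algebras, and the cone axioms only use
  nonnegative real scalars).\<close>
definition cone :: "'a::real_vector set \<Rightarrow> bool" where
  "cone P \<longleftrightarrow> P \<noteq> {} \<and> (\<forall>x\<in>P. \<forall>y\<in>P. x + y \<in> P)
     \<and> (\<forall>x\<in>P. \<forall>c::real. c \<ge> 0 \<longrightarrow> c *\<^sub>R x \<in> P)
     \<and> P \<inter> uminus ` P = {0}"

definition algebra_cone :: "'a::real_algebra_1 set \<Rightarrow> bool" where
  "algebra_cone P \<longleftrightarrow> cone P \<and> (\<forall>x\<in>P. \<forall>y\<in>P. x * y \<in> P) \<and> 1 \<in> P"

definition cone_le :: "'a::real_vector set \<Rightarrow> 'a \<Rightarrow> 'a \<Rightarrow> bool" where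
  "cone_le P a b \<longleftrightarrow> b - a \<in> P"

definition normal_cone :: "'a::real_normed_vector set \<Rightarrow> bool" where
  "normal_cone P \<longleftrightarrow> (\<exists>\<alpha>>0. \<forall>x y. cone_le P 0 x \<and> cone_le P x y \<longrightarrow> norm x \<le> \<alpha> * norm y)"

end

theory Submission
  imports Defs
begin

text \<open>Suppose \<open>a \<ge> 0\<close> and \<open>ab - ba \<ge> e\<close> (if instead \<open>b \<ge> 0\<close>, swap the roles via \<open>b(-a) - (-a)b = ab - ba\<close>).
  From \<open>[a\<^sup>n\<^sup>+\<^sup>1, b] = a [a\<^sup>n, b] + [a, b] a\<^sup>n\<close> one gets by induction \<open>[a\<^sup>n\<^sup>+\<^sup>1, b] \<ge> (n+1) a\<^sup>n \<ge> 0\<close>,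
  so normality and submultiplicativity give \<open>(n+1) \<parallel>a\<^sup>n\<parallel> \<le> 2\<alpha> \<parallel>b\<parallel> \<parallel>a\<^sup>n\<^sup>+\<^sup>1\<parallel> \<le> 2\<alpha> \<parallel>b\<parallel> \<parallel>a\<parallel> \<parallel>a\<^sup>n\<parallel>\<close>.
  For large \<open>n\<close> this forces \<open>a\<^sup>n = 0\<close>, and the first inequality then propagates
  \<open>a\<^sup>k = 0\<close> down to \<open>k = 0\<close>, contradicting \<open>e \<noteq> 0\<close>.\<close>

lemma algebra_coneD:
  assumes "algebra_cone P"
  shows algebra_cone_add: "\<And>u v. u \<in> P \<Longrightarrow> v \<in> P \<Longrightarrow> u + v \<in> P"
    and algebra_cone_scaleR: "\<And>u r. u \<in> P \<Longrightarrow> r \<ge> 0 \<Longrightarrow> r *\<^sub>R u \<in> P"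
    and algebra_cone_mult: "\<And>u v. u \<in> P \<Longrightarrow> v \<in> P \<Longrightarrow> u * v \<in> P"
    and algebra_cone_one: "1 \<in> P"
  using assms unfolding algebra_cone_def cone_def by auto

lemma algebra_cone_power:
  assumes "algebra_cone P" and "x \<in> P"
  shows "x ^ n \<in> P"
  by (induction n) (auto intro: algebra_cone_mult algebra_cone_one assms)

lemma commutator_power_ge:
  assumes P: "algebra_cone P" and "x \<in> P" and xy: "cone_le P 1 (x * y - y * x)"
  shows "cone_le P (real (Suc n) *\<^sub>R x ^ n) (x ^ Suc n * y - y * x ^ Suc n)"
  unfolding cone_le_def
proof (induction n)
  case 0
  then show ?case using xy by (simp add: cone_le_def)
next
  case (Suc n)
  have "x ^ Suc (Suc n) * y - y * x ^ Suc (Suc n) - real (Suc (Suc n)) *\<^sub>R x ^ Suc n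
      = x * (x ^ Suc n * y - y * x ^ Suc n - real (Suc n) *\<^sub>R x ^ n)
        + (x * y - y * x - 1) * x ^ Suc n"
  proof -
    have "real (Suc (Suc n)) *\<^sub>R x ^ Suc n = x ^ Suc n + real (Suc n) *\<^sub>R x ^ Suc n"
      by (simp only: of_nat_Suc scaleR_add_left scaleR_one add.commute)
    then show ?thesis by (simp add: algebra_simps)
  qed
  also have "\<dots> \<in> P"
    using Suc xy \<open>x \<in> P\<close> algebra_cone_power[OF P \<open>x \<in> P\<close>, of "Suc n"]
    by (intro algebra_cone_add[OF P] algebra_cone_mult[OF P]) (auto simp: cone_le_def)
  finally show ?case .
qed

lemma norm_commutator_le:
  fixes a b :: "'a::real_normed_algebra"
  shows "norm (a * b - b * a) \<le> 2 * norm a * norm b"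
proof -
  have "norm (a * b - b * a) \<le> norm (a * b) + norm (b * a)"
    by (rule norm_triangle_ineq4)
  also have "\<dots> \<le> norm a * norm b + norm b * norm a"
    by (intro add_mono norm_mult_ineq)
  finally show ?thesis by simp
qed

lemma factorial_vs_geometric_growth_zero:
  fixes N :: "nat \<Rightarrow> real"
  assumes nonneg: "\<And>n. N n \<ge> 0" and "K \<ge> 0"
    and lower: "\<And>n. real (Suc n) * N n \<le> K * N (Suc n)"
    and upper: "\<And>n. N (Suc n) \<le> c * N n"
  shows "N 0 = 0"
proof -
  obtain m :: nat where m: "real m > K * c"
    using reals_Archimedean2 by blast
  have "real (Suc m) * N m \<le> K * c * N m"
    using lower[of m] mult_left_mono[OF upper[of m] \<open>K \<ge> 0\<close>] by (simp add: mult.assoc)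
  also have "\<dots> \<le> real m * N m"
    using m nonneg[of m] by (intro mult_right_mono) auto
  finally have "N m = 0"
    using nonneg[of m] by (simp add: algebra_simps)
  moreover have step_down: "N n = 0" if "N (Suc n) = 0" for n
    using lower[of n] nonneg[of n] that by (simp add: mult_le_0_iff)
  ultimately show ?thesis
    by (induction m) auto
qed

lemma no_positive_commutator_ge_one:
  fixes P :: "'a::{real_normed_algebra, real_algebra_1} set"
  assumes P: "algebra_cone P" and "normal_cone P"
    and "x \<in> P" and xy: "cone_le P 1 (x * y - y * x)"
  shows False
proof -
  obtain \<alpha> where "\<alpha> > 0"
    and normal: "\<And>u v. cone_le P 0 u \<Longrightarrow> cone_le P u v \<Longrightarrow> norm u \<le> \<alpha> * norm v"
    using \<open>normal_cone P\<close> unfolding normal_cone_def by blast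
  have "real (Suc n) * norm (x ^ n) \<le> (2 * \<alpha> * norm y) * norm (x ^ Suc n)" for n
  proof -
    have "cone_le P 0 (real (Suc n) *\<^sub>R x ^ n)"
      using algebra_cone_scaleR[OF P algebra_cone_power[OF P \<open>x \<in> P\<close>]]
      by (simp add: cone_le_def)
    then have "real (Suc n) * norm (x ^ n) \<le> \<alpha> * norm (x ^ Suc n * y - y * x ^ Suc n)"
      using normal commutator_power_ge[OF P \<open>x \<in> P\<close> xy] by (metis norm_scaleR of_nat_0_le_iff abs_of_nonneg)
    also have "\<dots> \<le> \<alpha> * (2 * norm (x ^ Suc n) * norm y)"
      using \<open>\<alpha> > 0\<close> norm_commutator_le by (intro mult_left_mono) auto
    finally show ?thesis by (simp only: mult_ac)
  qed
  moreover have "norm (x ^ Suc n) \<le> norm x * norm (x ^ n)" for n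
    by (simp add: norm_mult_ineq)
  ultimately have "norm (x ^ 0) = 0"
    using \<open>\<alpha> > 0\<close>
    by (intro factorial_vs_geometric_growth_zero[where N = "\<lambda>n. norm (x ^ n)" and K = "2 * \<alpha> * norm y" and c = "norm x"]) auto
  then show False by simp
qed

theorem corollary2p2:
  fixes P :: "'a::{real_normed_algebra, real_algebra_1} set"
  assumes "algebra_cone P"
    and "normal_cone P"
  shows "\<not> (\<exists>a b. (a \<in> P \<or> b \<in> P) \<and> cone_le P 1 (a * b - b * a))"
proof
  assume "\<exists>a b. (a \<in> P \<or> b \<in> P) \<and> cone_le P 1 (a * b - b * a)"
  then obtain a b where "a \<in> P \<or> b \<in> P" and ab: "cone_le P 1 (a * b - b * a)"
    by blast
  moreover have "cone_le P 1 (b * (- a) - (- a) * b)"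
    using ab by (simp add: algebra_simps)
  ultimately show False
    using no_positive_commutator_ge_one[OF assms] by blast
qed

end
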